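(* If $k$ is even, then every matching of $X_{2k}$ has at least one disjoint compatible matching; i.e. $\mathbf{DCM}_k$ has no isolated vertices.
   Context: Let $k\ge 1$ and let $X_{2k}=\{P_1,\dots,P_{2k}\}$ be $2k$ points in convex position in the plane, labeled in clockwise cyclic order. A matching of $X_{2k}$ means a set of $k$ pairwise non-crossing straight segments (edges) with endpoints in $X_{2k}$ covering every point exactly once; its size is $k$. Two matchings $M,M'$ of $X_{2k}$ are disjoint compatible if they have no common edge and no edge of $M$ crosses an edge of $M'$. $\mathbf{DCM}_k$ is the graph whose vertices are the matchings of $X_{2k}$, two being adjacent iff they are disjoint compatible. *)

theory Defs
  imports Main
begin

text \<open>Points of X_2k in convex position are identified with their labels
  0, 1, ..., 2k-1 (label i stands for P_(i+1)), in cyclic clockwise order.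
  A straight segment between two points is the 2-element set of its endpoints.
  For points in convex position, two segments with four distinct endpoints
  cross iff their endpoints interleave in the cyclic order; segments sharing an
  endpoint do not cross.\<close>

definition crosses :: "nat set \<Rightarrow> nat set \<Rightarrow> bool" where
  "crosses e f \<longleftrightarrow> (\<exists>a b c d. e = {a, b} \<and> f = {c, d} \<and> a < c \<and> c < b \<and> b < d)"

definition noncrossing :: "nat set \<Rightarrow> nat set \<Rightarrow> bool" where
  "noncrossing e f \<longleftrightarrow> \<not> crosses e f \<and> \<not> crosses f e"

definition is_matching :: "nat \<Rightarrow> nat set set \<Rightarrow> bool" where
  "is_matching k M \<longleftrightarrow>
     (\<forall>e\<in>M. e \<subseteq> {0..<2*k} \<and> card e = 2) \<and>
     (\<forall>p\<in>{0..<2*k}. \<exists>!e. e \<in> M \<and> p \<in> e) \<and>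
     (\<forall>e\<in>M. \<forall>f\<in>M. noncrossing e f)"

definition disjoint_compatible :: "nat set set \<Rightarrow> nat set set \<Rightarrow> bool" where
  "disjoint_compatible M M' \<longleftrightarrow> M \<inter> M' = {} \<and> (\<forall>e\<in>M. \<forall>f\<in>M'. noncrossing e f)"

definition DCM_adj :: "nat \<Rightarrow> nat set set \<Rightarrow> nat set set \<Rightarrow> bool" where
  "DCM_adj k M M' \<longleftrightarrow> is_matching k M \<and> is_matching k M' \<and> disjoint_compatible M M'"

end

theory Submission
  imports Defs
begin

text \<open>
  We prove more generally that every non-crossing perfect matching of a finite set S of naturals
  with 4 dividing |S| has a disjoint compatible partner, by induction on |S|.
  Such a matching always covers some four consecutive points a < b < c < d of S by two of its
  edges, side by side as ab, cd or nested as ad, bc: among S and the sets of points lying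
  strictly under an edge, take a nonempty one of least size; every edge inside it joins
  neighbours of S, so it either contains two adjacent such edges or consists of the two points
  under an outer edge. Trading one pair of edges for the other is a disjoint compatible move on
  these four points, and since they are consecutive in S no edge on the remaining points can
  cross them, so the induction hypothesis for the remaining points completes the partner.
\<close>

lemma noncrossing_sym: "noncrossing e f \<longleftrightarrow> noncrossing f e"
  unfolding noncrossing_def by auto

definition matching_on :: "nat set \<Rightarrow> nat set set \<Rightarrow> bool" where
  "matching_on S M \<longleftrightarrow>
     (\<forall>e\<in>M. e \<subseteq> S \<and> card e = 2) \<and>
     (\<forall>p\<in>S. \<exists>!e. e \<in> M \<and> p \<in> e) \<and>
     (\<forall>e\<in>M. \<forall>f\<in>M. noncrossing e f)"

lemma is_matching_iff_matching_on: "is_matching k M \<longleftrightarrow> matching_on {0..<2*k} M"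
  by (simp add: is_matching_def matching_on_def)

lemma matching_on_edge_subset: "matching_on S M \<Longrightarrow> e \<in> M \<Longrightarrow> e \<subseteq> S"
  unfolding matching_on_def by blast

lemma matching_on_card_edge: "matching_on S M \<Longrightarrow> e \<in> M \<Longrightarrow> card e = 2"
  unfolding matching_on_def by blast

lemma matching_on_noncrossing: "matching_on S M \<Longrightarrow> e \<in> M \<Longrightarrow> f \<in> M \<Longrightarrow> noncrossing e f"
  unfolding matching_on_def by blast

lemma matching_on_ex1_edge:
  assumes "matching_on S M" "p \<in> S"
  shows "\<exists>!e. e \<in> M \<and> p \<in> e"
  using assms unfolding matching_on_def by simp

lemma matching_on_mem:
  assumes "matching_on S M" "{p, q} \<in> M"
  shows "p \<in> S" "q \<in> S"
  using assms unfolding matching_on_def by auto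

lemma matching_on_partner:
  assumes "matching_on S M" "p \<in> S"
  obtains q where "q \<noteq> p" "{p, q} \<in> M"
proof -
  obtain e where e: "e \<in> M" "p \<in> e"
    using matching_on_ex1_edge[OF assms] by blast
  then obtain a b where "e = {a, b}" "a \<noteq> b"
    using matching_on_card_edge[OF assms(1)] by (meson card_2_iff)
  then have "{p, if p = a then b else a} = e" "(if p = a then b else a) \<noteq> p"
    using e(2) by auto
  then show thesis
    using that e(1) by metis
qed

lemma matching_on_partner_unique:
  assumes "matching_on S M" "{p, q} \<in> M" "{p, q'} \<in> M"
  shows "q = q'"
proof -
  have "{p, q} = {p, q'}"
    using matching_on_ex1_edge[OF assms(1) matching_on_mem(1)[OF assms(1,2)]] assms(2,3)
    by (metis insertI1)
  then show ?thesis
    by (auto simp: doubleton_eq_iff)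
qed

lemma matching_on_not_interleaved:
  assumes "matching_on S M" "{a, b} \<in> M" "{c, d} \<in> M"
  shows "\<not> (a < c \<and> c < b \<and> b < d)"
proof
  assume "a < c \<and> c < b \<and> b < d"
  then have "crosses {a, b} {c, d}"
    unfolding crosses_def by blast
  moreover have "noncrossing {a, b} {c, d}"
    using assms unfolding matching_on_def by blast
  ultimately show False
    unfolding noncrossing_def by blast
qed

definition convex_in :: "nat set \<Rightarrow> nat set \<Rightarrow> bool" where
  "convex_in S R \<longleftrightarrow> R \<subseteq> S \<and> (\<forall>x\<in>S. \<forall>a\<in>R. \<forall>b\<in>R. a \<le> x \<longrightarrow> x \<le> b \<longrightarrow> x \<in> R)"

lemma convex_in_refl: "convex_in S S"
  unfolding convex_in_def by blast

definition gap :: "nat set \<Rightarrow> nat \<Rightarrow> nat \<Rightarrow> nat set" where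
  "gap S a b = {x\<in>S. a < x \<and> x < b}"

lemma convex_in_gap: "convex_in S (gap S a b)"
  unfolding convex_in_def gap_def by auto

lemma gap_subset_if_convex_in:
  assumes "convex_in S T" "x \<in> T" "y \<in> T"
  shows "gap S x y \<subseteq> T"
  using assms unfolding convex_in_def gap_def by (auto intro: less_imp_le)

lemma noncrossing_if_convex_in:
  assumes R: "convex_in S R" and e: "e \<subseteq> R" and f: "f \<subseteq> S - R"
  shows "noncrossing e f"
proof -
  have between: "\<not> (a < x \<and> x < b)" if "a \<in> e" "b \<in> e" "x \<in> f" for a b x
  proof
    assume "a < x \<and> x < b"
    moreover have "a \<in> R" "b \<in> R" "x \<in> S" "x \<notin> R"
      using e f that by auto
    ultimately show False
      using R unfolding convex_in_def by (meson less_imp_le)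
  qed
  show ?thesis
    unfolding noncrossing_def crosses_def
  proof (intro conjI notI; elim exE conjE)
    fix a b c d assume "e = {a, b}" "f = {c, d}" "a < c" "c < b"
    then show False using between[of a b c] by simp
  next
    fix a b c d assume "f = {a, b}" "e = {c, d}" "c < b" "b < d"
    then show False using between[of c d b] by simp
  qed
qed

lemma matching_on_partner_in_gap:
  assumes M: "matching_on S M" and ab: "{a, b} \<in> M"
    and x: "x \<in> gap S a b" and xy: "{x, y} \<in> M"
  shows "y \<in> gap S a b"
proof -
  have ax: "a < x" "x < b"
    using x unfolding gap_def by auto
  have "y \<noteq> a"
    using matching_on_partner_unique[OF M, of a b x] ab xy ax by (auto simp: insert_commute)
  moreover have "y \<noteq> b"
    using matching_on_partner_unique[OF M, of b a x] ab xy ax by (auto simp: insert_commute)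
  moreover have "\<not> y < a"
    using matching_on_not_interleaved[OF M, of y x a b] ab xy ax by (auto simp: insert_commute)
  moreover have "\<not> b < y"
    using matching_on_not_interleaved[OF M ab xy] ax by auto
  ultimately show ?thesis
    using matching_on_mem(2)[OF M xy] unfolding gap_def by auto
qed

lemma ex1_edge_Un:
  assumes "\<exists>!e. e \<in> M1 \<and> p \<in> e" "\<forall>f\<in>M2. p \<notin> f"
  shows "\<exists>!e. e \<in> M1 \<union> M2 \<and> p \<in> e"
  using assms by blast

lemma matching_on_Diff:
  assumes M: "matching_on S M" and N: "matching_on R N" and NM: "N \<subseteq> M"
  shows "matching_on (S - R) (M - N)"
proof -
  have edge_of_R: "e \<in> N" if "e \<in> M" "p \<in> e" "p \<in> R" for e p
  proof -
    obtain n where n: "n \<in> N" "p \<in> n"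
      using matching_on_ex1_edge[OF N \<open>p \<in> R\<close>] by blast
    then have "p \<in> S"
      using matching_on_edge_subset[OF M] NM by blast
    then show ?thesis
      using matching_on_ex1_edge[OF M] that n NM by blast
  qed
  show ?thesis
    unfolding matching_on_def
  proof (intro conjI ballI)
    fix e assume "e \<in> M - N"
    then show "e \<subseteq> S - R" "card e = 2"
      using edge_of_R matching_on_edge_subset[OF M] matching_on_card_edge[OF M] by blast+
  next
    fix p assume p: "p \<in> S - R"
    then obtain e where e: "e \<in> M" "p \<in> e" and uniq: "\<And>e'. e' \<in> M \<Longrightarrow> p \<in> e' \<Longrightarrow> e' = e"
      using matching_on_ex1_edge[OF M] by (metis Diff_iff)
    have "e \<notin> N"
      using e p matching_on_edge_subset[OF N] by blast
    with e uniq show "\<exists>!e. e \<in> M - N \<and> p \<in> e"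
      by blast
  next
    fix e f assume "e \<in> M - N" "f \<in> M - N"
    then show "noncrossing e f"
      using matching_on_noncrossing[OF M] by blast
  qed
qed

lemma matching_on_Un:
  assumes M1: "matching_on A M1" and M2: "matching_on B M2" and AB: "A \<inter> B = {}"
    and cross: "\<forall>e\<in>M1. \<forall>f\<in>M2. noncrossing e f"
  shows "matching_on (A \<union> B) (M1 \<union> M2)"
  unfolding matching_on_def
proof (intro conjI ballI)
  fix e assume "e \<in> M1 \<union> M2"
  then show "e \<subseteq> A \<union> B" "card e = 2"
    using M1 M2 matching_on_edge_subset matching_on_card_edge by blast+
next
  fix p assume "p \<in> A \<union> B"
  then show "\<exists>!e. e \<in> M1 \<union> M2 \<and> p \<in> e"
  proof
    assume p: "p \<in> A"
    then have "\<forall>f\<in>M2. p \<notin> f"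
      using AB matching_on_edge_subset[OF M2] by blast
    then show ?thesis
      using ex1_edge_Un matching_on_ex1_edge[OF M1 p] by blast
  next
    assume p: "p \<in> B"
    then have "\<forall>e\<in>M1. p \<notin> e"
      using AB matching_on_edge_subset[OF M1] by blast
    then show ?thesis
      using ex1_edge_Un[of M2 p M1] matching_on_ex1_edge[OF M2 p] by (simp add: Un_commute)
  qed
next
  fix e f assume "e \<in> M1 \<union> M2" "f \<in> M1 \<union> M2"
  then show "noncrossing e f"
  proof (elim UnE)
    assume "e \<in> M2" "f \<in> M1"
    then show ?thesis
      using cross noncrossing_sym by auto
  qed (use cross matching_on_noncrossing[OF M1] matching_on_noncrossing[OF M2] in auto)
qed

lemma disjoint_compatible_Un:
  assumes "disjoint_compatible A A'" "disjoint_compatible B B'"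
    and "\<forall>e\<in>A \<union> A'. \<forall>f\<in>B \<union> B'. e \<noteq> f \<and> noncrossing e f"
  shows "disjoint_compatible (A \<union> B) (A' \<union> B')"
  using assms noncrossing_sym unfolding disjoint_compatible_def by blast

lemma matching_on_swap_block:
  assumes M: "matching_on S M" and R: "convex_in S R" and NM: "N \<subseteq> M"
    and N: "matching_on R N" and N': "matching_on R N'" and NN': "disjoint_compatible N N'"
    and M0': "matching_on (S - R) M0'" and M0M0': "disjoint_compatible (M - N) M0'"
  shows "matching_on S (N' \<union> M0') \<and> disjoint_compatible M (N' \<union> M0')"
proof
  have separated: "e \<noteq> f \<and> noncrossing e f" if "e \<in> N \<union> N'" "f \<in> (M - N) \<union> M0'" for e f
  proof -
    have e: "e \<subseteq> R" "card e = 2"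
      using that(1) N N' matching_on_edge_subset matching_on_card_edge by blast+
    have f: "f \<subseteq> S - R"
      using that(2) matching_on_Diff[OF M N NM] M0' matching_on_edge_subset by blast
    have "e \<noteq> f"
    proof
      assume "e = f"
      then have "e = {}"
        using e(1) f by blast
      then show False
        using e(2) by simp
    qed
    then show ?thesis
      using noncrossing_if_convex_in[OF R e(1) f] by blast
  qed
  have "S = R \<union> (S - R)"
    using R unfolding convex_in_def by blast
  then show "matching_on S (N' \<union> M0')"
    using matching_on_Un[OF N' M0'] separated by (metis Diff_disjoint UnCI)
  have "M = N \<union> (M - N)"
    using NM by blast
  moreover have "disjoint_compatible (N \<union> (M - N)) (N' \<union> M0')"
    using disjoint_compatible_Un[OF NN' M0M0'] separated by blast
  ultimately show "disjoint_compatible M (N' \<union> M0')"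
    by simp
qed

lemma crosses_doubleton_iff:
  assumes "a < (b::nat)" "c < d"
  shows "crosses {a, b} {c, d} \<longleftrightarrow> a < c \<and> c < b \<and> b < d"
  using assms unfolding crosses_def by (auto simp: doubleton_eq_iff)

lemma matching_on_four_parallel:
  assumes "a < b" "b < c" "c < d"
  shows "matching_on {a, b, c, d} {{a, b}, {c, d}}"
  using assms unfolding matching_on_def noncrossing_def
  by (auto simp: crosses_doubleton_iff doubleton_eq_iff)

lemma matching_on_four_nested:
  assumes "a < b" "b < c" "c < d"
  shows "matching_on {a, b, c, d} {{a, d}, {b, c}}"
  using assms unfolding matching_on_def noncrossing_def
  by (auto simp: crosses_doubleton_iff doubleton_eq_iff)

lemma disjoint_compatible_parallel_nested:
  assumes "a < b" "b < c" "c < d"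
  shows "disjoint_compatible {{a, b}, {c, d}} {{a, d}, {b, c}}"
    and "disjoint_compatible {{a, d}, {b, c}} {{a, b}, {c, d}}"
  using assms unfolding disjoint_compatible_def noncrossing_def
  by (auto simp: crosses_doubleton_iff doubleton_eq_iff)

lemma four_point_swap:
  assumes "a < b" "b < c" "c < d" "{{a, b}, {c, d}} \<subseteq> M \<or> {{a, d}, {b, c}} \<subseteq> M"
  obtains N N' where "N \<subseteq> M" "matching_on {a, b, c, d} N" "matching_on {a, b, c, d} N'"
    "disjoint_compatible N N'"
  using assms(4) that matching_on_four_parallel[OF assms(1-3)] matching_on_four_nested[OF assms(1-3)]
    disjoint_compatible_parallel_nested[OF assms(1-3)]
  by blast

text \<open>Since gap S x y is empty for y < x, the last clause says that every edge meeting T lies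
  in T and joins two neighbours in S.\<close>

definition leaf_region :: "nat set \<Rightarrow> nat set set \<Rightarrow> nat set \<Rightarrow> bool" where
  "leaf_region S M T \<longleftrightarrow> finite T \<and> convex_in S T \<and>
     (\<forall>x y. x \<in> T \<longrightarrow> {x, y} \<in> M \<longrightarrow> y \<in> T \<and> gap S x y = {})"

lemma leaf_region_first_edge:
  assumes M: "matching_on S M" and T: "leaf_region S M T" "T \<noteq> {}" and cd: "{Min T, d} \<in> M"
  shows "Min T < d" "d \<in> T" "\<forall>x\<in>T - {Min T, d}. d < x"
proof -
  have fin: "finite T" and TS: "T \<subseteq> S"
    using T(1) unfolding leaf_region_def convex_in_def by auto
  have cT: "Min T \<in> T"
    using fin T(2) by simp
  show dT: "d \<in> T"
    using T(1) cT cd unfolding leaf_region_def by blast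
  have empty: "gap S (Min T) d = {}"
    using T(1) cT cd unfolding leaf_region_def by blast
  have "d \<noteq> Min T"
    using matching_on_card_edge[OF M cd] by auto
  then show "Min T < d"
    using Min_le[OF fin dT] by simp
  show "\<forall>x\<in>T - {Min T, d}. d < x"
  proof
    fix x assume x: "x \<in> T - {Min T, d}"
    then have "Min T < x" "x \<in> S"
      using Min_le[OF fin] TS by fastforce+
    then show "d < x"
      using x empty unfolding gap_def by auto
  qed
qed

lemma leaf_region_Diff_first_edge:
  assumes M: "matching_on S M" and T: "leaf_region S M T" "T \<noteq> {}" and cd: "{Min T, d} \<in> M"
  shows "leaf_region S M (T - {Min T, d})"
proof -
  note first = leaf_region_first_edge[OF assms]
  have convex: "convex_in S T" and closed: "\<And>x y. x \<in> T \<Longrightarrow> {x, y} \<in> M \<Longrightarrow> y \<in> T \<and> gap S x y = {}"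
    using T(1) unfolding leaf_region_def by blast+
  have "convex_in S (T - {Min T, d})"
    unfolding convex_in_def
  proof (intro conjI ballI impI)
    show "T - {Min T, d} \<subseteq> S"
      using convex unfolding convex_in_def by blast
  next
    fix x a b assume x: "x \<in> S" "a \<le> x" "x \<le> b" and ab: "a \<in> T - {Min T, d}" "b \<in> T - {Min T, d}"
    have "x \<in> T"
      using convex x ab unfolding convex_in_def by blast
    moreover have "d < x"
      using first(3) ab(1) x(2) by (meson less_le_trans)
    ultimately show "x \<in> T - {Min T, d}"
      using first(1) by simp
  qed
  moreover have "y \<notin> {Min T, d}" if "x \<in> T - {Min T, d}" "{x, y} \<in> M" for x y
  proof
    assume "y \<in> {Min T, d}"
    then consider "y = Min T" | "y = d"
      by blast
    then show False
    proof cases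
      case 1
      then have "x = d"
        using matching_on_partner_unique[OF M, of "Min T" x d] that(2) cd by (simp add: insert_commute)
      then show False
        using that(1) by simp
    next
      case 2
      then have "x = Min T"
        using matching_on_partner_unique[OF M, of d x "Min T"] that(2) cd by (simp add: insert_commute)
      then show False
        using that(1) by simp
    qed
  qed
  ultimately show ?thesis
    using T(1) closed unfolding leaf_region_def by blast
qed

definition consecutive4 :: "nat set \<Rightarrow> nat \<Rightarrow> nat \<Rightarrow> nat \<Rightarrow> nat \<Rightarrow> bool" where
  "consecutive4 S a b c d \<longleftrightarrow> a < b \<and> b < c \<and> c < d \<and> {x\<in>S. a \<le> x \<and> x \<le> d} = {a, b, c, d}"

lemma convex_in_consecutive4:
  assumes "consecutive4 S a b c d"
  shows "convex_in S {a, b, c, d}"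
proof -
  have "{a, b, c, d} = {x\<in>S. a \<le> x \<and> x \<le> d}"
    using assms unfolding consecutive4_def by simp
  then show ?thesis
    unfolding convex_in_def by auto
qed

lemma leaf_region_parallel_block:
  assumes M: "matching_on S M" and T: "leaf_region S M T"
    and cd: "{Min T, d} \<in> M" and rest: "T - {Min T, d} \<noteq> {}"
  shows "\<exists>a b c d. consecutive4 S a b c d \<and> {{a, b}, {c, d}} \<subseteq> M"
proof -
  define T' where "T' = T - {Min T, d}"
  have "T \<noteq> {}"
    using rest by blast
  note first = leaf_region_first_edge[OF M T this cd]
  have T': "leaf_region S M T'"
    unfolding T'_def using leaf_region_Diff_first_edge[OF M T \<open>T \<noteq> {}\<close> cd] .
  have TS: "T \<subseteq> S" and convex: "convex_in S T" and fin': "finite T'"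
    using T T' unfolding leaf_region_def convex_in_def by blast+
  have "Min T \<in> T"
    using T \<open>T \<noteq> {}\<close> unfolding leaf_region_def by simp
  have c'T': "Min T' \<in> T'"
    using Min_in[OF fin'] rest unfolding T'_def by blast
  then obtain d' where c'd': "{Min T', d'} \<in> M"
    using matching_on_partner[OF M] TS unfolding T'_def by blast
  have "T' \<noteq> {}"
    using c'T' by blast
  note second = leaf_region_first_edge[OF M T' this c'd']
  have "d < Min T'"
    using first(3) c'T' unfolding T'_def by blast
  moreover have "{x\<in>S. Min T \<le> x \<and> x \<le> d'} = {Min T, d, Min T', d'}"
  proof
    show "{x\<in>S. Min T \<le> x \<and> x \<le> d'} \<subseteq> {Min T, d, Min T', d'}"
    proof
      fix x assume x: "x \<in> {x\<in>S. Min T \<le> x \<and> x \<le> d'}"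
      have "d' \<in> T"
        using second(2) unfolding T'_def by blast
      then have "x \<in> T"
        using convex x \<open>Min T \<in> T\<close> unfolding convex_in_def by blast
      show "x \<in> {Min T, d, Min T', d'}"
      proof (rule ccontr)
        assume "x \<notin> {Min T, d, Min T', d'}"
        then have "x \<in> T' - {Min T', d'}"
          using \<open>x \<in> T\<close> unfolding T'_def by blast
        then have "d' < x"
          using second(3) by blast
        then show False
          using x by simp
      qed
    qed
    show "{Min T, d, Min T', d'} \<subseteq> {x\<in>S. Min T \<le> x \<and> x \<le> d'}"
      using first second c'T' \<open>d < Min T'\<close> TS \<open>Min T \<in> T\<close> unfolding T'_def by auto
  qed
  ultimately have "consecutive4 S (Min T) d (Min T') d'"
    using first(1) second(1) c'T' unfolding consecutive4_def by blast
  then show ?thesis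
    using cd c'd' by blast
qed

lemma exists_leaf_region:
  assumes M: "matching_on S M" and fin: "finite S" and ne: "S \<noteq> {}"
  obtains T where "leaf_region S M T" "T \<noteq> {}" "T = S \<or> (\<exists>a b. {a, b} \<in> M \<and> T = gap S a b)"
proof -
  \<comment> \<open>An edge with a nonempty gap inside a least region would bound a smaller region.\<close>
  define regions where
    "regions = {T. T \<noteq> {} \<and> (T = S \<or> (\<exists>a b. {a, b} \<in> M \<and> T = gap S a b))}"
  have "S \<in> regions"
    using ne unfolding regions_def by blast
  then obtain T where T: "T \<in> regions" and least: "\<And>T'. T' \<in> regions \<Longrightarrow> card T \<le> card T'"
    using ex_has_least_nat[of "\<lambda>T. T \<in> regions" S card] by blast
  have convex: "convex_in S T"
    using T convex_in_gap convex_in_refl unfolding regions_def by auto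
  have finT: "finite T"
    using convex fin unfolding convex_in_def by (blast intro: finite_subset)
  have closed: "y \<in> T" if "x \<in> T" "{x, y} \<in> M" for x y
    using T that matching_on_mem[OF M] matching_on_partner_in_gap[OF M] unfolding regions_def by blast
  have leaf: "gap S x y = {}" if "x \<in> T" "{x, y} \<in> M" for x y
  proof (rule ccontr)
    assume "gap S x y \<noteq> {}"
    with that have "gap S x y \<in> regions"
      unfolding regions_def by blast
    moreover have "gap S x y \<subset> T"
      using gap_subset_if_convex_in[OF convex that(1) closed[OF that]] that(1)
      unfolding gap_def by blast
    ultimately show False
      using least psubset_card_mono[OF finT] by (meson not_le)
  qed
  show thesis
    using that[of T] T finT convex closed leaf unfolding leaf_region_def regions_def by blast
qed

lemma matching_on_swappable_block:
  assumes M: "matching_on S M" and fin: "finite S" and four: "4 \<le> card S"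
  shows "\<exists>a b c d. consecutive4 S a b c d \<and> ({{a, b}, {c, d}} \<subseteq> M \<or> {{a, d}, {b, c}} \<subseteq> M)"
proof -
  have "S \<noteq> {}"
    using four by auto
  then obtain T where T: "leaf_region S M T" "T \<noteq> {}"
    and region: "T = S \<or> (\<exists>a b. {a, b} \<in> M \<and> T = gap S a b)"
    using exists_leaf_region[OF M fin] by blast
  have TS: "T \<subseteq> S" and "finite T"
    using T(1) unfolding leaf_region_def convex_in_def by simp_all
  define c where "c = Min T"
  have "c \<in> T"
    using Min_in \<open>finite T\<close> T(2) unfolding c_def by blast
  then obtain d where cd: "{c, d} \<in> M"
    using matching_on_partner[OF M] TS by blast
  note first = leaf_region_first_edge[OF M T cd[unfolded c_def], folded c_def]
  show ?thesis
  proof (cases "T - {c, d} = {}")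
    case False
    then have "\<exists>a b c d. consecutive4 S a b c d \<and> {{a, b}, {c, d}} \<subseteq> M"
      using leaf_region_parallel_block[OF M T(1) cd[unfolded c_def]] unfolding c_def by simp
    then show ?thesis
      by meson
  next
    case True
    \<comment> \<open>T is then the pair of points under an edge ab, giving the nested block a c d b.\<close>
    then have Tcd: "T = {c, d}"
      using first(2) \<open>c \<in> T\<close> by blast
    then have "T \<noteq> S"
      using four card_insert_le_m1[of 2 "{d}" c] by auto
    then obtain a b where ab: "{a, b} \<in> M" and Tab: "T = gap S a b"
      using region by blast
    have gap_ab: "{x\<in>S. a < x \<and> x < b} = {c, d}"
      using Tcd unfolding Tab gap_def by simp
    then have "c \<in> {x\<in>S. a < x \<and> x < b}" "d \<in> {x\<in>S. a < x \<and> x < b}"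
      by simp_all
    then have "a < c" "d < b"
      by simp_all
    moreover have "{x\<in>S. a \<le> x \<and> x \<le> b} = {a, b} \<union> {x\<in>S. a < x \<and> x < b}"
      using matching_on_mem[OF M ab] calculation first(1) by auto
    ultimately have "consecutive4 S a c d b"
      using first(1) gap_ab unfolding consecutive4_def by auto
    then show ?thesis
      using ab cd by (meson empty_subsetI insert_subset)
  qed
qed

lemma matching_on_disjoint_compatible_exists:
  assumes "finite S" "card S = 4 * m" "matching_on S M"
  shows "\<exists>M'. matching_on S M' \<and> disjoint_compatible M M'"
  using assms
proof (induction m arbitrary: S M)
  case 0
  then have "S = {}"
    by simp
  then have "M = {}"
    using matching_on_edge_subset[OF "0.prems"(3)] matching_on_card_edge[OF "0.prems"(3)]
    by (metis card.empty subset_empty zero_neq_numeral equals0I)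
  then show ?case
    using "0.prems"(3) unfolding disjoint_compatible_def by auto
next
  case (Suc m)
  have "4 \<le> card S"
    using Suc.prems(2) by simp
  then obtain a b c d where block: "consecutive4 S a b c d"
    and edges: "{{a, b}, {c, d}} \<subseteq> M \<or> {{a, d}, {b, c}} \<subseteq> M"
    using matching_on_swappable_block[OF Suc.prems(3,1)] by meson
  define R where "R = {a, b, c, d}"
  have order: "a < b" "b < c" "c < d"
    using block unfolding consecutive4_def by simp_all
  obtain N N' where N: "N \<subseteq> M" "matching_on R N" "matching_on R N'" "disjoint_compatible N N'"
    using four_point_swap[OF order edges] unfolding R_def by blast
  have convex: "convex_in S R"
    using convex_in_consecutive4[OF block] unfolding R_def .
  have "card (S - R) = 4 * m"
    using Suc.prems(1,2) convex order
    by (simp add: R_def convex_in_def card_Diff_subset finite_subset)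
  then obtain M0' where "matching_on (S - R) M0'" "disjoint_compatible (M - N) M0'"
    using Suc.IH Suc.prems(1) matching_on_Diff[OF Suc.prems(3) N(2,1)] by blast
  then show ?case
    using matching_on_swap_block[OF Suc.prems(3) convex N] by blast
qed

theorem mainTheorem10:
  fixes k :: nat and M :: "nat set set"
  assumes "k \<ge> 1" and "even k" and "is_matching k M"
  shows "\<exists>M'. DCM_adj k M M'"
proof -
  obtain m where "card {0..<2*k} = 4 * m"
    using \<open>even k\<close> by (auto elim!: evenE)
  then obtain M' where "matching_on {0..<2*k} M'" "disjoint_compatible M M'"
    using matching_on_disjoint_compatible_exists \<open>is_matching k M\<close>
    unfolding is_matching_iff_matching_on by blast
  then show ?thesis
    using \<open>is_matching k M\<close> unfolding DCM_adj_def is_matching_iff_matching_on by blast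
qed

end
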